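(* The Walnut group $W=(\mathrm{SO}(2,\mathbb{R})\ltimes\mathbb{H})/D$ has the topological $R_\infty$-property.
   Context: $\mathbb{H}$ is the 3-dimensional Heisenberg group of real $3\times3$ upper triangular unipotent matrices; write its element $(y_{ij})$ as $(a,b,c)$ with $a=y_{12}$, $b=y_{23}$, $c=y_{13}$. $\mathrm{GL}(2,\mathbb{R})$ acts on $\mathbb{H}$ by automorphisms via: for $\psi=(x_{ij})\in\mathrm{GL}(2,\mathbb{R})$, $\psi(a,b,c)=\big(x_{11}a+x_{12}b,\ x_{21}a+x_{22}b,\ c\det\psi-\tfrac12ab\det\psi+\tfrac12(x_{11}a+x_{12}b)(x_{21}a+x_{22}b)\big)$. The semidirect product $\mathrm{SO}(2,\mathbb{R})\ltimes\mathbb{H}$ uses the restriction of this action; its center is the center $Z=\{(0,0,c)\}$ of $\mathbb{H}$, and $D$ is an infinite discrete subgroup of $Z$. For an automorphism $\varphi$ of a group $G$, the $\varphi$-twisted conjugacy classes are the equivalence classes of $x\sim_\varphi y$ iff $y=gx\varphi(g)^{-1}$ for some $g\in G$; $R(\varphi)$ is their number. A topological group $G$ has the topological $R_\infty$-property if $R(\varphi)=\infty$ for every automorphism $\varphi$ of $G$ that is a homeomorphism. *)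

theory Defs
  imports "HOL-Analysis.Analysis" "HOL-Algebra.Coset"
begin

text \<open>Elements of SO(2,R) semidirect H: a 2x2 real matrix M (in SO(2)) together with
  a Heisenberg element (a,b,c), where a = y12, b = y23, c = y13.\<close>

type_synonym heis = "real \<times> real \<times> real"
type_synonym sdp = "(real^2^2) \<times> heis"

definition heis_mult :: "heis \<Rightarrow> heis \<Rightarrow> heis" where
  "heis_mult = (\<lambda>(a,b,c) (a',b',c'). (a + a', b + b', c + c' + a * b'))"

definition gl_act :: "real^2^2 \<Rightarrow> heis \<Rightarrow> heis" where
  "gl_act X = (\<lambda>(a,b,c).
     (X$1$1 * a + X$1$2 * b,
      X$2$1 * a + X$2$2 * b,
      c * det X - 1/2 * a * b * det X
        + 1/2 * (X$1$1 * a + X$1$2 * b) * (X$2$1 * a + X$2$2 * b)))"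

definition SO2 :: "(real^2^2) set" where
  "SO2 = {M. orthogonal_matrix M \<and> det M = 1}"

definition SDP :: "sdp monoid" where
  "SDP = \<lparr> carrier = SO2 \<times> UNIV,
           mult = (\<lambda>(M,h) (N,k). (M ** N, heis_mult h (gl_act M k))),
           one = (mat 1, (0,0,0)) \<rparr>"

definition SDP_top :: "sdp topology" where
  "SDP_top = subtopology euclidean (SO2 \<times> UNIV)"

definition Zc :: "sdp set" where
  "Zc = {(mat 1, (0,0,c)) | c. True}"

definition quotient_top :: "'a topology \<Rightarrow> ('a \<Rightarrow> 'b) \<Rightarrow> 'b topology" where
  "quotient_top X f = topology (\<lambda>U. U \<subseteq> f ` topspace X \<and> openin X {x \<in> topspace X. f x \<in> U})"

definition Walnut :: "sdp set \<Rightarrow> sdp set monoid" where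
  "Walnut D = SDP Mod D"

definition Walnut_top :: "sdp set \<Rightarrow> sdp set topology" where
  "Walnut_top D = quotient_top SDP_top (\<lambda>x. D #>\<^bsub>SDP\<^esub> x)"

definition twisted_conj :: "('a, 'm) monoid_scheme \<Rightarrow> ('a \<Rightarrow> 'a) \<Rightarrow> ('a \<times> 'a) set" where
  "twisted_conj G \<phi> = {(x, y). x \<in> carrier G \<and> y \<in> carrier G \<and>
      (\<exists>g \<in> carrier G. y = g \<otimes>\<^bsub>G\<^esub> x \<otimes>\<^bsub>G\<^esub> inv\<^bsub>G\<^esub> (\<phi> g))}"

definition R_infinite :: "('a, 'm) monoid_scheme \<Rightarrow> ('a \<Rightarrow> 'a) \<Rightarrow> bool" where
  "R_infinite G \<phi> \<longleftrightarrow> infinite (carrier G // twisted_conj G \<phi>)"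

definition top_R_infty_property :: "('a, 'm) monoid_scheme \<Rightarrow> 'a topology \<Rightarrow> bool" where
  "top_R_infty_property G T \<longleftrightarrow>
     (\<forall>\<phi>. \<phi> \<in> iso G G \<and> homeomorphic_map T T \<phi> \<longrightarrow> R_infinite G \<phi>)"

end

theory Submission
  imports Defs
begin

text \<open>
  Write elements of \<open>SO(2,\<real>) \<ltimes> \<HH>\<close> as \<open>(u, z, c)\<close> with \<open>u\<close> a unit complex number,
  \<open>z = a + i b\<close> and \<open>c\<close> real. Pure translations \<open>(1, z, c)\<close> are commutators modulo the centre,
  so an automorphism \<open>\<phi>\<close> of \<open>W\<close> induces a character \<open>s\<close> of the circle (on rotations) and an
  additive map \<open>A\<close> of \<open>\<complex>\<close> with \<open>A (u z) = s u \<cdot> A z\<close> (on translations). Writing small reals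
  as \<open>u + cnj u\<close> shows that \<open>A\<close> is \<open>\<real>\<close>-linear, hence either \<open>s = id\<close>, or \<open>s = cnj\<close> and
  \<open>A z = w \<cdot> cnj z\<close>.

  If \<open>s = id\<close>, the rotation part of an element is constant on twisted classes, so the
  rotations give infinitely many classes. If \<open>s = cnj\<close>, then \<open>\<phi>\<close> acts on the centre
  \<open>\<real>/D\<close> as multiplication by \<open>-\<bar>w\<bar>\<^sup>2\<close>; this must map the infinite discrete group \<open>D\<close>
  onto itself, which forces \<open>\<bar>w\<bar> = 1\<close>. Then \<open>F z = z + w \<cdot> cnj z\<close> kills the translations
  produced by twisting, so \<open>F\<close> of the translation part is a class invariant up to sign and a
  fixed shift, and the translations along a line give infinitely many classes.
\<close>

lemma mat_1_entries:
  "(mat 1 :: real^2^2)$1$1 = 1" "(mat 1 :: real^2^2)$1$2 = 0"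
  "(mat 1 :: real^2^2)$2$1 = 0" "(mat 1 :: real^2^2)$2$2 = 1"
  by (simp_all add: mat_def)

lemma matrix_mult_2_entries:
  fixes X Y :: "real^2^2"
  shows "(X ** Y)$1$1 = X$1$1*Y$1$1 + X$1$2*Y$2$1"
    "(X ** Y)$1$2 = X$1$1*Y$1$2 + X$1$2*Y$2$2"
    "(X ** Y)$2$1 = X$2$1*Y$1$1 + X$2$2*Y$2$1"
    "(X ** Y)$2$2 = X$2$1*Y$1$2 + X$2$2*Y$2$2"
  by (simp_all add: matrix_matrix_mult_def sum_2)

lemma mat2_eq_iff:
  "(M::real^2^2) = N \<longleftrightarrow> M$1$1 = N$1$1 \<and> M$1$2 = N$1$2 \<and> M$2$1 = N$2$1 \<and> M$2$2 = N$2$2"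
  by (auto simp: vec_eq_iff forall_2)

lemma gl_act_heis_mult: "gl_act X (heis_mult h k) = heis_mult (gl_act X h) (gl_act X k)"
  by (cases h; cases k) (simp add: gl_act_def heis_mult_def det_2 field_simps)

lemma gl_act_matrix_mult: "gl_act (X ** Y) h = gl_act X (gl_act Y h)"
  by (cases h) (simp add: gl_act_def det_2 matrix_mult_2_entries field_simps)

lemma gl_act_mat_1: "gl_act (mat 1) h = h"
  by (cases h) (simp add: gl_act_def det_2 mat_1_entries algebra_simps)

lemma gl_act_0: "gl_act X (0,0,0) = (0,0,0)"
  by (simp add: gl_act_def)

lemma heis_mult_assoc: "heis_mult (heis_mult h k) l = heis_mult h (heis_mult k l)"
  by (cases h; cases k; cases l) (simp add: heis_mult_def algebra_simps)

lemma heis_mult_0_left: "heis_mult (0,0,0) h = h"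
  by (cases h) (simp add: heis_mult_def)

definition heis_inv :: "heis \<Rightarrow> heis" where
  "heis_inv = (\<lambda>(a,b,c). (-a, -b, -c + a*b))"

lemma heis_mult_inv_left: "heis_mult (heis_inv h) h = (0,0,0)"
  by (cases h) (simp add: heis_mult_def heis_inv_def)

lemma SO2_mult: "M \<in> SO2 \<Longrightarrow> N \<in> SO2 \<Longrightarrow> M ** N \<in> SO2"
  by (simp add: SO2_def orthogonal_matrix_mul det_mul)

lemma SO2_mat_1: "mat 1 \<in> SO2"
  by (simp add: SO2_def orthogonal_matrix_id)

lemma SO2_transpose: "M \<in> SO2 \<Longrightarrow> transpose M \<in> SO2"
  by (simp add: SO2_def)

lemma SO2_transpose_mult: "M \<in> SO2 \<Longrightarrow> transpose M ** M = mat 1"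
  by (simp add: SO2_def orthogonal_matrix)

lemma SO2_entries:
  assumes "M \<in> SO2"
  shows "M$2$2 = M$1$1" "M$1$2 = - M$2$1" "(M$1$1)\<^sup>2 + (M$2$1)\<^sup>2 = 1"
proof -
  have o: "transpose M ** M = mat 1" and d: "det M = 1"
    using assms by (auto simp: SO2_def orthogonal_matrix)
  have e11: "M$1$1*M$1$1 + M$2$1*M$2$1 = 1"
    using arg_cong[OF o, of "\<lambda>X. X$1$1"] by (simp add: matrix_mult_2_entries mat_1_entries transpose_def)
  have e22: "M$1$2*M$1$2 + M$2$2*M$2$2 = 1"
    using arg_cong[OF o, of "\<lambda>X. X$2$2"] by (simp add: matrix_mult_2_entries mat_1_entries transpose_def)
  have "M$1$1*M$2$2 - M$1$2*M$2$1 = 1" using d by (simp add: det_2)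
  then have "(M$1$1 - M$2$2)\<^sup>2 + (M$1$2 + M$2$1)\<^sup>2 = 0"
    using e11 e22 by (simp add: power2_eq_square algebra_simps)
  then have "(M$1$1 - M$2$2)\<^sup>2 = 0" "(M$1$2 + M$2$1)\<^sup>2 = 0"
    by (smt (verit) zero_le_power2)+
  then show "M$2$2 = M$1$1" "M$1$2 = - M$2$1" by auto
  show "(M$1$1)\<^sup>2 + (M$2$1)\<^sup>2 = 1" using e11 by (simp add: power2_eq_square)
qed

lemma SDP_simps:
  "carrier SDP = SO2 \<times> UNIV" "one SDP = (mat 1, (0,0,0))"
  "mult SDP x y = (fst x ** fst y, heis_mult (snd x) (gl_act (fst x) (snd y)))"
  by (simp_all add: SDP_def split_beta)

lemma group_SDP: "group SDP"
proof (rule groupI)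
  fix x y assume "x \<in> carrier SDP" "y \<in> carrier SDP"
  then show "x \<otimes>\<^bsub>SDP\<^esub> y \<in> carrier SDP" by (auto simp: SDP_simps SO2_mult)
next
  show "\<one>\<^bsub>SDP\<^esub> \<in> carrier SDP" by (simp add: SDP_simps SO2_mat_1)
next
  fix x y z
  show "x \<otimes>\<^bsub>SDP\<^esub> y \<otimes>\<^bsub>SDP\<^esub> z = x \<otimes>\<^bsub>SDP\<^esub> (y \<otimes>\<^bsub>SDP\<^esub> z)"
    by (simp add: SDP_simps matrix_mul_assoc gl_act_heis_mult gl_act_matrix_mult heis_mult_assoc)
next
  fix x
  show "\<one>\<^bsub>SDP\<^esub> \<otimes>\<^bsub>SDP\<^esub> x = x" by (simp add: SDP_simps gl_act_mat_1 heis_mult_0_left)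
next
  fix x assume x: "x \<in> carrier SDP"
  let ?y = "(transpose (fst x), gl_act (transpose (fst x)) (heis_inv (snd x)))"
  have "?y \<in> carrier SDP" "?y \<otimes>\<^bsub>SDP\<^esub> x = \<one>\<^bsub>SDP\<^esub>"
    using x by (auto simp: SDP_simps SO2_transpose SO2_transpose_mult gl_act_heis_mult[symmetric]
        heis_mult_inv_left gl_act_0)
  then show "\<exists>y\<in>carrier SDP. y \<otimes>\<^bsub>SDP\<^esub> x = \<one>\<^bsub>SDP\<^esub>" by blast
qed

interpretation SDP: group SDP by (rule group_SDP)

definition rot_mat :: "complex \<Rightarrow> real^2^2" where
  "rot_mat u = vector [vector [Re u, - Im u], vector [Im u, Re u]]"

lemma rot_mat_entries [simp]:
  "rot_mat u $1$1 = Re u" "rot_mat u $1$2 = - Im u" "rot_mat u $2$1 = Im u" "rot_mat u $2$2 = Re u"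
  by (simp_all add: rot_mat_def)

lemma rot_mat_1: "rot_mat 1 = mat 1"
  by (simp add: mat2_eq_iff mat_1_entries)

lemma norm_eq_1_iff_Re_Im: "cmod u = 1 \<longleftrightarrow> (Re u)\<^sup>2 + (Im u)\<^sup>2 = 1"
  by (simp add: cmod_def)

lemma rot_mat_SO2: "cmod u = 1 \<Longrightarrow> rot_mat u \<in> SO2"
proof -
  assume "cmod u = 1"
  then have h: "Re u * Re u + Im u * Im u = 1" by (simp add: norm_eq_1_iff_Re_Im power2_eq_square)
  have "transpose (rot_mat u) ** rot_mat u = mat 1"
    using h by (simp add: mat2_eq_iff matrix_mult_2_entries mat_1_entries transpose_def algebra_simps)
  moreover have "det (rot_mat u) = 1" using h by (simp add: det_2)
  ultimately show ?thesis by (simp add: SO2_def orthogonal_matrix)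
qed

lemma det_rot_mat: "cmod u = 1 \<Longrightarrow> det (rot_mat u) = 1"
  using rot_mat_SO2 SO2_def by auto

lemma unit_mult_cnj: "cmod u = 1 \<Longrightarrow> u * cnj u = 1"
  by (metis complex_norm_square mult_1 of_real_1 power_one)

lemma unit_cnj_mult: "cmod u = 1 \<Longrightarrow> cnj u * u = 1"
  using unit_mult_cnj by (simp add: mult.commute)

definition sdp_of :: "complex \<Rightarrow> complex \<Rightarrow> real \<Rightarrow> sdp" where
  "sdp_of u z c = (rot_mat u, (Re z, Im z, c))"

definition rot :: "sdp \<Rightarrow> complex" where
  "rot x = Complex (fst x$1$1) (fst x$2$1)"

definition transl :: "sdp \<Rightarrow> complex" where
  "transl x = Complex (fst (snd x)) (fst (snd (snd x)))"

definition height :: "sdp \<Rightarrow> real" where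
  "height x = snd (snd (snd x))"

lemma sdp_of_coordinates [simp]:
  "rot (sdp_of u z c) = u" "transl (sdp_of u z c) = z" "height (sdp_of u z c) = c"
  by (simp_all add: sdp_of_def rot_def transl_def height_def complex_eq_iff)

lemma sdp_of_eq_iff: "sdp_of u z c = sdp_of u' z' c' \<longleftrightarrow> u = u' \<and> z = z' \<and> c = c'"
  by (metis sdp_of_coordinates)

lemma carrier_SDP_sdp_of:
  assumes "x \<in> carrier SDP"
  shows "x = sdp_of (rot x) (transl x) (height x)" "cmod (rot x) = 1"
proof -
  have "fst x \<in> SO2" using assms by (auto simp: SDP_simps)
  note M = SO2_entries[OF this]
  have "fst x = rot_mat (rot x)" using M by (simp add: mat2_eq_iff rot_def)
  then show "x = sdp_of (rot x) (transl x) (height x)"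
    by (cases x) (auto simp: sdp_of_def transl_def height_def)
  show "cmod (rot x) = 1" using M(3) by (simp add: norm_eq_1_iff_Re_Im rot_def)
qed

lemma sdp_of_in_carrier [simp]: "sdp_of u z c \<in> carrier SDP \<longleftrightarrow> cmod u = 1"
proof
  show "sdp_of u z c \<in> carrier SDP \<Longrightarrow> cmod u = 1"
    using carrier_SDP_sdp_of(2)[of "sdp_of u z c"] by simp
qed (simp add: SDP_simps sdp_of_def rot_mat_SO2)

lemma carrier_SDP_eq_iff:
  assumes "x \<in> carrier SDP" "y \<in> carrier SDP"
  shows "x = y \<longleftrightarrow> rot x = rot y \<and> transl x = transl y \<and> height x = height y"
  using carrier_SDP_sdp_of(1)[OF assms(1)] carrier_SDP_sdp_of(1)[OF assms(2)] by metis

definition height_cocycle :: "complex \<Rightarrow> complex \<Rightarrow> complex \<Rightarrow> real" where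
  "height_cocycle u z z' = - Re z' * Im z' / 2 + Re (u*z') * Im (u*z') / 2 + Re z * Im (u*z')"

lemma sdp_of_mult:
  "cmod u = 1 \<Longrightarrow> sdp_of u z c \<otimes>\<^bsub>SDP\<^esub> sdp_of u' z' c' =
     sdp_of (u*u') (z + u*z') (c + c' + height_cocycle u z z')"
  by (simp add: SDP_simps sdp_of_def det_rot_mat gl_act_def heis_mult_def height_cocycle_def)
    (simp add: mat2_eq_iff matrix_mult_2_entries algebra_simps)

lemma sdp_of_one: "\<one>\<^bsub>SDP\<^esub> = sdp_of 1 0 0"
  by (simp add: SDP_simps sdp_of_def rot_mat_1)

lemma sdp_of_inv:
  assumes "cmod u = 1"
  shows "inv\<^bsub>SDP\<^esub> (sdp_of u z c) =
    sdp_of (cnj u) (- cnj u * z) (- c - height_cocycle (cnj u) (- cnj u * z) z)"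
  using assms by (intro SDP.inv_equality) (simp_all add: sdp_of_mult sdp_of_one unit_cnj_mult)

lemma rot_transl_height_mult:
  assumes "x \<in> carrier SDP" "y \<in> carrier SDP"
  shows "rot (x \<otimes>\<^bsub>SDP\<^esub> y) = rot x * rot y"
    "transl (x \<otimes>\<^bsub>SDP\<^esub> y) = transl x + rot x * transl y"
    "height (x \<otimes>\<^bsub>SDP\<^esub> y) = height x + height y + height_cocycle (rot x) (transl x) (transl y)"
  using carrier_SDP_sdp_of[OF assms(1)] carrier_SDP_sdp_of(1)[OF assms(2)]
  by (metis sdp_of_mult sdp_of_coordinates)+

lemma rot_transl_inv:
  assumes "x \<in> carrier SDP"
  shows "rot (inv\<^bsub>SDP\<^esub> x) = cnj (rot x)" "transl (inv\<^bsub>SDP\<^esub> x) = - cnj (rot x) * transl x"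
  using carrier_SDP_sdp_of[OF assms] by (metis sdp_of_inv sdp_of_coordinates)+

definition central :: "real \<Rightarrow> sdp" where
  "central c = sdp_of 1 0 c"

lemma Zc_eq_range_central: "Zc = range central"
  by (auto simp: Zc_def central_def sdp_of_def rot_mat_1)

lemma central_in_carrier [simp]: "central c \<in> carrier SDP"
  by (simp add: central_def)

lemma central_mult_left:
  "x \<in> carrier SDP \<Longrightarrow> central c \<otimes>\<^bsub>SDP\<^esub> x = sdp_of (rot x) (transl x) (height x + c)"
  by (subst carrier_SDP_eq_iff)
    (auto simp: central_def rot_transl_height_mult height_cocycle_def carrier_SDP_sdp_of)

lemma central_mult_right:
  "x \<in> carrier SDP \<Longrightarrow> x \<otimes>\<^bsub>SDP\<^esub> central c = sdp_of (rot x) (transl x) (height x + c)"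
  by (subst carrier_SDP_eq_iff)
    (auto simp: central_def rot_transl_height_mult height_cocycle_def carrier_SDP_sdp_of)

lemma central_inv: "inv\<^bsub>SDP\<^esub> (central a) = central (- a)"
  by (simp add: central_def sdp_of_inv height_cocycle_def)

lemma central_commute: "x \<in> carrier SDP \<Longrightarrow> central c \<otimes>\<^bsub>SDP\<^esub> x = x \<otimes>\<^bsub>SDP\<^esub> central c"
  by (simp add: central_mult_left central_mult_right)

lemma central_0: "central 0 = \<one>\<^bsub>SDP\<^esub>"
  by (simp add: central_def sdp_of_one)

definition commutator :: "sdp \<Rightarrow> sdp \<Rightarrow> sdp" where
  "commutator a b = a \<otimes>\<^bsub>SDP\<^esub> b \<otimes>\<^bsub>SDP\<^esub> inv\<^bsub>SDP\<^esub> a \<otimes>\<^bsub>SDP\<^esub> inv\<^bsub>SDP\<^esub> b"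

lemma commutator_in_carrier [simp]:
  "a \<in> carrier SDP \<Longrightarrow> b \<in> carrier SDP \<Longrightarrow> commutator a b \<in> carrier SDP"
  by (simp add: commutator_def)

definition symp_form :: "complex \<Rightarrow> complex \<Rightarrow> real" where
  "symp_form p q = Re p * Im q - Im p * Re q"

lemma commutator_translations: "commutator (sdp_of 1 p c) (sdp_of 1 q d) = central (symp_form p q)"
  by (simp add: commutator_def sdp_of_inv sdp_of_mult central_def height_cocycle_def symp_form_def
      algebra_simps)

lemma commutator_translations_carrier:
  assumes "x \<in> carrier SDP" "y \<in> carrier SDP" "rot x = 1" "rot y = 1"
  shows "commutator x y = central (symp_form (transl x) (transl y))"
  using assms carrier_SDP_sdp_of(1) commutator_translations by metis

lemma central_eq_commutator: "central c = commutator (sdp_of 1 1 0) (sdp_of 1 (\<i> * of_real c) 0)"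
  by (simp add: commutator_translations symp_form_def)

locale real_ring_endo =
  fixes g :: "real \<Rightarrow> real"
  assumes add: "g (x + y) = g x + g y"
    and mult: "g (x * y) = g x * g y"
    and one: "g 1 = 1"
begin

sublocale additive g by unfold_locales (rule add)

lemma of_int: "g (of_int k) = of_int k"
proof -
  have nat: "g (of_nat n) = of_nat n" for n
    by (induction n) (simp_all add: zero add one)
  show ?thesis
  proof (cases "k \<ge> 0")
    case True
    then show ?thesis using nat[of "nat k"] by simp
  next
    case False
    then show ?thesis using nat[of "nat (- k)"] minus[of "of_nat (nat (- k))"] by simp
  qed
qed

lemma Rats: "q \<in> \<rat> \<Longrightarrow> g q = q"
proof -
  assume "q \<in> \<rat>"
  then have "q \<in> {of_int a / of_int b | a b. b \<noteq> 0}" using Rats_eq_int_div_int by blast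
  then obtain a b where ab: "q = of_int a / of_int b" "b \<noteq> 0" by blast
  then have qb: "q * of_int b = of_int a" by simp
  then have "g q * of_int b = of_int a" using mult[of q "of_int b"] of_int[of b] of_int[of a] by simp
  then have "g q * of_int b = q * of_int b" using qb by simp
  with ab(2) show ?thesis by simp
qed

text \<open>Squares are mapped to squares, so \<open>g\<close> is monotone.\<close>

lemma mono: "a \<le> b \<Longrightarrow> g a \<le> g b"
proof -
  assume "a \<le> b"
  then have "b - a = sqrt (b - a) * sqrt (b - a)" by simp
  then have "g (b - a) = g (sqrt (b - a)) * g (sqrt (b - a))" using mult by metis
  then have "g (b - a) \<ge> 0" by simp
  then show ?thesis by (simp add: diff)
qed

lemma eq_id: "g x = x"
proof (rule ccontr)
  assume "g x \<noteq> x"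
  then consider "g x < x" | "x < g x" by linarith
  then show False
  proof cases
    case 1
    then obtain q where "q \<in> \<rat>" "g x < q" "q < x" using Rats_dense_in_real by blast
    then show False using mono[of q x] Rats by simp
  next
    case 2
    then obtain q where "q \<in> \<rat>" "x < q" "q < g x" using Rats_dense_in_real by blast
    then show False using mono[of x q] Rats by simp
  qed
qed

end

lemma real_eq_of_nat_mult_bounded:
  fixes r :: real
  shows "\<exists>(n::nat) r0. \<bar>r0\<bar> \<le> 2 \<and> r = of_nat n * r0"
proof -
  obtain n :: nat where n: "\<bar>r\<bar> < real n" using reals_Archimedean2 by blast
  then have "\<bar>r\<bar> / real n \<le> 1" by (auto simp: divide_le_eq_1)
  then have "\<bar>r / real n\<bar> \<le> 2" by (simp only: abs_divide abs_of_nat)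
  moreover have "r = real n * (r / real n)" using n by simp
  ultimately show ?thesis by blast
qed

lemma real_eq_unit_add_cnj:
  assumes "\<bar>r\<bar> \<le> 2"
  shows "\<exists>u. cmod u = 1 \<and> complex_of_real r = u + cnj u"
proof -
  define a where "a = r / 2"
  have "\<bar>a\<bar> \<le> 1" using assms by (simp add: a_def)
  then have "a * a \<le> 1" by (metis abs_mult_self_eq mult_le_one abs_ge_zero)
  then have "(sqrt (1 - a * a))\<^sup>2 = 1 - a * a" by simp
  then have "cmod (Complex a (sqrt (1 - a * a))) = 1" by (simp add: norm_eq_1_iff_Re_Im power2_eq_square)
  moreover have "complex_of_real r = Complex a (sqrt (1 - a * a)) + cnj (Complex a (sqrt (1 - a * a)))"
    by (simp add: complex_eq_iff a_def)
  ultimately show ?thesis by blast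
qed

locale circle_equivariant =
  fixes A s :: "complex \<Rightarrow> complex"
  assumes add: "A (z + z') = A z + A z'"
    and equivariant: "cmod u = 1 \<Longrightarrow> A (u * z) = s u * A z"
    and s_unit: "cmod u = 1 \<Longrightarrow> cmod (s u) = 1"
    and s_mult: "cmod u = 1 \<Longrightarrow> cmod u' = 1 \<Longrightarrow> s (u * u') = s u * s u'"
    and nonzero: "\<exists>z. A z \<noteq> 0"
begin

sublocale additive A by unfold_locales (rule add)

lemma Re_Im_decomp: "A z = A (of_real (Re z)) + A (\<i> * of_real (Im z))"
proof -
  have "z = of_real (Re z) + \<i> * of_real (Im z)" by (simp add: complex_eq_iff)
  then have "A z = A (of_real (Re z) + \<i> * of_real (Im z))" by (rule arg_cong)
  also have "\<dots> = A (of_real (Re z)) + A (\<i> * of_real (Im z))" by (rule add)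
  finally show ?thesis .
qed

lemma s_1: "s 1 = 1"
proof -
  have "s 1 * s 1 = s 1 * 1" using s_mult[of 1 1] by simp
  moreover have "s 1 \<noteq> 0" using s_unit[of 1] by auto
  ultimately show ?thesis by simp
qed

lemma s_cnj:
  assumes u: "cmod u = 1"
  shows "s (cnj u) = cnj (s u)"
proof -
  have "s u * s (cnj u) = s (u * cnj u)" using s_mult[of u "cnj u"] u by simp
  also have "\<dots> = s u * cnj (s u)" using u s_unit[OF u] by (simp add: unit_mult_cnj s_1)
  finally have "s u * s (cnj u) = s u * cnj (s u)" .
  moreover have "s u \<noteq> 0" using s_unit[OF u] by auto
  ultimately show ?thesis by simp
qed

lemma of_nat_mult: "A (of_nat n * z) = of_nat n * A z"
  by (induction n) (simp_all add: zero add distrib_right)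

text \<open>A real \<open>r\<close> with \<open>\<bar>r\<bar> \<le> 2\<close> is \<open>u + cnj u\<close> for a unit \<open>u\<close>, so \<open>A\<close> commutes with it up
  to the real factor \<open>s u + cnj (s u)\<close>; larger reals are integer multiples of these.\<close>

lemma real_scaling: "\<exists>t::real. \<forall>z. A (of_real r * z) = of_real t * A z"
proof -
  obtain n :: nat and r0 where r: "\<bar>r0\<bar> \<le> 2" "r = of_nat n * r0"
    using real_eq_of_nat_mult_bounded by blast
  obtain u where u: "cmod u = 1" "complex_of_real r0 = u + cnj u"
    using real_eq_unit_add_cnj[OF r(1)] by blast
  have "A (of_real r * z) = of_real (of_nat n * (2 * Re (s u))) * A z" for z
  proof -
    have "A (of_real r * z) = of_nat n * A (u * z + cnj u * z)"
      using r(2) u(2) by (simp add: of_nat_mult[symmetric] distrib_right mult.assoc)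
    also have "\<dots> = of_nat n * ((s u + cnj (s u)) * A z)"
      using u(1) by (simp add: add equivariant s_cnj distrib_right)
    finally show ?thesis by (simp add: complex_add_cnj)
  qed
  then show ?thesis by blast
qed

lemma A_1_nonzero: "A 1 \<noteq> 0"
proof
  assume A1: "A 1 = 0"
  have "A (of_real r) = 0" for r
  proof -
    obtain t where "\<forall>z. A (of_real r * z) = of_real t * A z" using real_scaling by blast
    then have "A (of_real r * 1) = of_real t * A 1" by blast
    then show ?thesis by (simp add: A1)
  qed
  then have "A z = 0" for z
    using Re_Im_decomp[of z] equivariant[of \<i> "of_real (Im z)"] by simp
  then show False using nonzero by blast
qed

text \<open>The factor by which \<open>A\<close> scales \<open>of_real r\<close> is a ring endomorphism of \<open>\<real>\<close>, hence the
  identity: \<open>A\<close> is automatically \<open>\<real>\<close>-linear.\<close>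

lemma real_linear: "A (of_real r * z) = of_real r * A z"
proof -
  define w where "w = A 1"
  have w: "w \<noteq> 0" using A_1_nonzero by (simp add: w_def)
  define g where "g r = Re (A (of_real r) / w)" for r
  have gA: "A (of_real r * z) = of_real (g r) * A z" for r z
  proof -
    obtain t where t: "\<forall>z. A (of_real r * z) = of_real t * A z" using real_scaling by blast
    then have "g r = t" using w t[rule_format, of 1] by (simp add: g_def w_def)
    then show ?thesis using t by simp
  qed
  have gw: "A (of_real r) = of_real (g r) * w" for r using gA[of r 1] by (simp add: w_def)
  have "g (x + y) = g x + g y" for x y
  proof -
    have "of_real (g (x + y)) * w = of_real (g x + g y) * w"
      using gw[of "x + y"] gw[of x] gw[of y] add[of "of_real x" "of_real y"] by (simp add: distrib_right)
    then show ?thesis using w by (metis mult_cancel_right of_real_eq_iff)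
  qed
  moreover have "g (x * y) = g x * g y" for x y
  proof -
    have "of_real (g (x * y)) * w = A (of_real x * of_real y)" using gw[of "x * y"] by simp
    also have "\<dots> = of_real (g x * g y) * w" using gA[of x "of_real y"] gw[of y] by simp
    finally show ?thesis using w by (metis mult_cancel_right of_real_eq_iff of_real_mult)
  qed
  moreover have "g 1 = 1" using w by (simp add: g_def w_def)
  ultimately have "real_ring_endo g" by unfold_locales
  then have "g r = r" for r by (rule real_ring_endo.eq_id)
  then show ?thesis using gA by simp
qed

lemma classification:
  "(\<forall>u. cmod u = 1 \<longrightarrow> s u = u) \<or>
   (\<exists>w. w \<noteq> 0 \<and> (\<forall>z. A z = w * cnj z) \<and> (\<forall>u. cmod u = 1 \<longrightarrow> s u = cnj u))"
proof -
  define w where "w = A 1"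
  have w: "w \<noteq> 0" using A_1_nonzero by (simp add: w_def)
  have A_eq: "A z = of_real (Re z) * w + s \<i> * of_real (Im z) * w" for z
    using Re_Im_decomp[of z] equivariant[of \<i> "of_real (Im z)"]
      real_linear[of "Re z" 1] real_linear[of "Im z" 1]
    by (simp add: w_def)
  have s_unit_eq: "s u * w = A u" if "cmod u = 1" for u
    using equivariant[OF that, of 1] by (simp add: w_def)
  have "s (-1) = -1"
    using s_unit_eq[of "-1"] real_linear[of "-1" 1] w
    by (simp add: w_def) (metis mult_cancel_right mult_minus_left mult_1)
  then have "s \<i> * s \<i> = -1" using s_mult[of \<i> \<i>] by simp
  then have "(s \<i> - \<i>) * (s \<i> + \<i>) = 0" by (simp add: algebra_simps)
  then have "s \<i> = \<i> \<or> s \<i> = - \<i>" by (simp add: eq_neg_iff_add_eq_0)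
  then show ?thesis
  proof
    assume "s \<i> = \<i>"
    then have "A z = w * z" for z
      using A_eq[of z] by (simp add: complex_eq_iff algebra_simps)
    then have "s u = u" if "cmod u = 1" for u using s_unit_eq[OF that] w by (simp add: mult.commute)
    then show ?thesis by blast
  next
    assume "s \<i> = - \<i>"
    then have Aw: "A z = w * cnj z" for z
      using A_eq[of z] by (simp add: complex_eq_iff algebra_simps)
    then have "s u = cnj u" if "cmod u = 1" for u using s_unit_eq[OF that] w by (simp add: mult.commute)
    then show ?thesis using Aw w by blast
  qed
qed

end

lemma infinite_twisted_classes:
  assumes G: "group G" and phi: "phi \<in> hom G G" and S: "infinite S" and f: "f ` S \<subseteq> carrier G"
    and not_conj: "\<And>i j. i \<in> S \<Longrightarrow> j \<in> S \<Longrightarrow> (f i, f j) \<in> twisted_conj G phi \<Longrightarrow> i = j"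
  shows "R_infinite G phi"
  unfolding R_infinite_def
proof
  assume fin: "finite (carrier G // twisted_conj G phi)"
  interpret group_hom G G phi using G phi by (simp add: group_hom_def group_hom_axioms_def)
  define cl where "cl i = twisted_conj G phi `` {f i}" for i
  have refl: "(f i, f i) \<in> twisted_conj G phi" if "i \<in> S" for i
    using that f by (auto simp: twisted_conj_def intro!: bexI[of _ "\<one>\<^bsub>G\<^esub>"])
  have "cl ` S \<subseteq> carrier G // twisted_conj G phi"
    using f by (auto simp: cl_def intro!: quotientI)
  then have "finite (cl ` S)" using fin by (rule finite_subset)
  moreover have "inj_on cl S"
  proof (rule inj_onI)
    fix i j assume ij: "i \<in> S" "j \<in> S" "cl i = cl j"
    then have "f j \<in> cl i" using refl[of j] by (simp add: cl_def)
    then show "i = j" using not_conj ij by (simp add: cl_def)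
  qed
  ultimately have "finite S" by (rule finite_imageD)
  then show False using S by simp
qed

lemma discrete_scaling_invariant_eq_1:
  fixes S :: "real set"
  assumes d: "d \<in> S" "d \<noteq> 0"
    and discrete: "e > 0" "\<And>c. c \<in> S \<Longrightarrow> \<bar>c\<bar> < e \<Longrightarrow> c = 0"
    and t: "t > 0" "\<And>c. c \<in> S \<Longrightarrow> t * c \<in> S" "\<And>c. c \<in> S \<Longrightarrow> c / t \<in> S"
  shows "t = 1"
proof (rule ccontr)
  have pow: "t ^ n * d \<in> S" "d / t ^ n \<in> S" for n
  proof (induction n)
    case (Suc n)
    { case 1 show ?case using t(2)[OF Suc.IH(1)] by (simp add: mult.assoc) }
    { case 2 show ?case using t(3)[OF Suc.IH(2)] by (simp add: divide_divide_eq_left mult.commute) }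
  qed (simp_all add: d)
  have small: "\<exists>n. k ^ n * \<bar>d\<bar> < e" if "0 < k" "k < 1" for k
    using real_arch_pow_inv[of "e / \<bar>d\<bar>" k] that discrete(1) d(2) by (auto simp: pos_less_divide_eq)
  assume "t \<noteq> 1"
  then consider "t < 1" | "t > 1" by linarith
  then show False
  proof cases
    case 1
    then obtain n where "t ^ n * \<bar>d\<bar> < e" using small[of t] t(1) by blast
    then have "\<bar>t ^ n * d\<bar> < e" using t(1) by (simp add: abs_mult)
    then show False using discrete(2)[OF pow(1)] t(1) d(2) by simp
  next
    case 2
    then obtain n where "(1 / t) ^ n * \<bar>d\<bar> < e" using small[of "1 / t"] by auto
    then have "\<bar>d / t ^ n\<bar> < e" using t(1) by (simp add: abs_divide power_divide)
    then show False using discrete(2)[OF pow(2)] t(1) d(2) by simp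
  qed
qed

definition reflection_sum :: "complex \<Rightarrow> complex \<Rightarrow> complex" where
  "reflection_sum w z = z + w * cnj z"

lemma reflection_sum_add: "reflection_sum w (a + b) = reflection_sum w a + reflection_sum w b"
  by (simp add: reflection_sum_def algebra_simps)

lemma reflection_sum_of_real_mult: "reflection_sum w (of_real r * z) = of_real r * reflection_sum w z"
  by (simp add: reflection_sum_def algebra_simps)

lemma reflection_sum_diff: "reflection_sum w (a - b) = reflection_sum w a - reflection_sum w b"
  by (simp add: reflection_sum_def algebra_simps)

lemma reflection_sum_antifixed:
  assumes "cmod w = 1"
  shows "reflection_sum w (z - w * cnj z) = 0"
proof -
  have "reflection_sum w (z - w * cnj z) = z - (w * cnj w) * z"
    by (simp add: reflection_sum_def algebra_simps)
  then show ?thesis using assms by (simp add: unit_mult_cnj)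
qed

lemma reflection_sum_nonzero: "\<exists>q. reflection_sum w q \<noteq> 0"
proof (cases "reflection_sum w 1 = 0")
  case True
  then have "w = -1" by (simp add: reflection_sum_def add_eq_0_iff)
  then have "reflection_sum w \<i> = 2 * \<i>" by (simp add: reflection_sum_def)
  then show ?thesis by (intro exI[of _ \<i>]) simp
qed blast

lemma symp_form_conj:
  "symp_form (w * cnj v) (w * cnj v') = - (cmod w)\<^sup>2 * symp_form v v'"
  unfolding cmod_power2 by (simp add: symp_form_def algebra_simps power2_eq_square)

text \<open>Keep the operations of \<open>SDP Mod D\<close> abstract, so that the simplifier reasons with the
  homomorphism laws of the projection and of \<open>\<phi>\<close> instead of with cosets.\<close>

declare one_FactGroup [simp del] mult_FactGroup [simp del]

locale walnut_aut =
  fixes D :: "sdp set" and phi :: "sdp set \<Rightarrow> sdp set"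
  assumes subgroup_D: "subgroup D SDP" and D_central: "D \<subseteq> Zc"
    and discrete: "\<exists>e>0. \<forall>c. central c \<in> D \<and> \<bar>c\<bar> < e \<longrightarrow> c = 0"
    and infinite_D: "infinite D"
    and iso: "phi \<in> iso (SDP Mod D) (SDP Mod D)"
begin

abbreviation W where "W \<equiv> SDP Mod D"

definition proj :: "sdp \<Rightarrow> sdp set" where
  "proj x = D #>\<^bsub>SDP\<^esub> x"

definition heights :: "real set" where
  "heights = {c. central c \<in> D}"

lemma D_elemE:
  assumes "h \<in> D"
  obtains c where "c \<in> heights" "h = central c"
  using assms D_central by (auto simp: heights_def Zc_eq_range_central)

lemma normal_D: "D \<lhd> SDP"
proof -
  have "x \<otimes>\<^bsub>SDP\<^esub> h \<otimes>\<^bsub>SDP\<^esub> inv\<^bsub>SDP\<^esub> x \<in> D" if x: "x \<in> carrier SDP" and h: "h \<in> D" for x h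
  proof -
    obtain c where c: "h = central c" using h by (rule D_elemE)
    have "x \<otimes>\<^bsub>SDP\<^esub> h \<otimes>\<^bsub>SDP\<^esub> inv\<^bsub>SDP\<^esub> x = h"
      using x by (simp add: c central_commute[symmetric] SDP.m_assoc)
    then show ?thesis using h by simp
  qed
  then show ?thesis using subgroup_D SDP.normal_inv_iff by blast
qed

sublocale N: normal D SDP by (rule normal_D)

sublocale W: group W by (rule N.factorgroup_is_group)

lemma proj_hom: "proj \<in> hom SDP W"
  unfolding proj_def[abs_def] by (rule N.r_coset_hom_Mod)

sublocale proj: group_hom SDP W proj
  by unfold_locales (rule proj_hom)

sublocale phi: group_hom W W phi
  using iso by unfold_locales (simp add: iso_def)

lemma carrier_W: "carrier W = proj ` carrier SDP"
  by (simp add: carrier_FactGroup proj_def)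

lemma proj_eq_iff:
  assumes x: "x \<in> carrier SDP" and y: "y \<in> carrier SDP"
  shows "proj x = proj y \<longleftrightarrow> rot x = rot y \<and> transl x = transl y \<and> height x - height y \<in> heights"
proof
  assume "proj x = proj y"
  then have "x \<in> D #>\<^bsub>SDP\<^esub> y" using SDP.repr_independenceD[OF subgroup_D x] by (simp add: proj_def)
  then obtain h where "h \<in> D" "x = h \<otimes>\<^bsub>SDP\<^esub> y" unfolding r_coset_def by blast
  then obtain c where "c \<in> heights" "x = central c \<otimes>\<^bsub>SDP\<^esub> y"
    by (metis D_elemE)
  then show "rot x = rot y \<and> transl x = transl y \<and> height x - height y \<in> heights"
    using y by (simp add: central_mult_left)
next
  assume eq: "rot x = rot y \<and> transl x = transl y \<and> height x - height y \<in> heights"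
  then have "x = central (height x - height y) \<otimes>\<^bsub>SDP\<^esub> y"
    using x y by (subst carrier_SDP_eq_iff) (auto simp: central_mult_left carrier_SDP_sdp_of)
  moreover have "central (height x - height y) \<in> D" using eq by (simp add: heights_def)
  ultimately have "x \<in> D #>\<^bsub>SDP\<^esub> y" unfolding r_coset_def by blast
  then show "proj x = proj y" using SDP.repr_independence[OF _ y subgroup_D] by (simp add: proj_def)
qed

lemma proj_central_eq_one_iff: "proj (central c) = proj \<one>\<^bsub>SDP\<^esub> \<longleftrightarrow> c \<in> heights"
  by (simp add: proj_eq_iff sdp_of_one central_def)

lemma heights_uminus: "c \<in> heights \<Longrightarrow> - c \<in> heights"
  using subgroup.m_inv_closed[OF subgroup_D] by (simp add: heights_def central_inv[symmetric])

lemma heights_nonzero: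
  obtains d where "d \<in> heights" "d \<noteq> 0"
proof -
  have "\<not> heights \<subseteq> {0}"
  proof
    assume heights: "heights \<subseteq> {0}"
    have "D \<subseteq> {central 0}"
    proof
      fix h assume "h \<in> D"
      then obtain c where "c \<in> heights" "h = central c" by (rule D_elemE)
      then show "h \<in> {central 0}" using heights by auto
    qed
    then show False using infinite_D finite_subset by blast
  qed
  then show ?thesis using that by blast
qed

text \<open>A lift of \<open>\<phi>\<close> to \<open>SO(2,\<real>) \<ltimes> \<HH>\<close>; it is a homomorphism only modulo \<open>D\<close>, but its rotation
  and translation parts are genuinely multiplicative because \<open>D\<close> is central.\<close>

definition lift :: "sdp \<Rightarrow> sdp" where
  "lift x = (SOME y. y \<in> carrier SDP \<and> proj y = phi (proj x))"

lemma lift: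
  assumes "x \<in> carrier SDP"
  shows "lift x \<in> carrier SDP" "proj (lift x) = phi (proj x)"
proof -
  have "phi (proj x) \<in> carrier W" using assms by simp
  then have "phi (proj x) \<in> proj ` carrier SDP" by (simp only: carrier_W)
  then have "\<exists>y. y \<in> carrier SDP \<and> proj y = phi (proj x)" by blast
  then have "lift x \<in> carrier SDP \<and> proj (lift x) = phi (proj x)"
    unfolding lift_def by (rule someI_ex)
  then show "lift x \<in> carrier SDP" "proj (lift x) = phi (proj x)" by auto
qed

lemma proj_lift_mult:
  assumes "x \<in> carrier SDP" "y \<in> carrier SDP"
  shows "proj (lift (x \<otimes>\<^bsub>SDP\<^esub> y)) = proj (lift x \<otimes>\<^bsub>SDP\<^esub> lift y)"
proof -
  have "proj (lift (x \<otimes>\<^bsub>SDP\<^esub> y)) = phi (proj x \<otimes>\<^bsub>W\<^esub> proj y)"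
    using assms by (simp add: lift)
  also have "\<dots> = proj (lift x) \<otimes>\<^bsub>W\<^esub> proj (lift y)" using assms by (simp add: lift)
  also have "\<dots> = proj (lift x \<otimes>\<^bsub>SDP\<^esub> lift y)" using assms by (simp add: lift)
  finally show ?thesis .
qed

lemma proj_lift_inv:
  assumes "x \<in> carrier SDP"
  shows "proj (lift (inv\<^bsub>SDP\<^esub> x)) = proj (inv\<^bsub>SDP\<^esub> (lift x))"
proof -
  have "proj (lift (inv\<^bsub>SDP\<^esub> x)) = phi (inv\<^bsub>W\<^esub> (proj x))"
    using assms by (simp add: lift)
  also have "\<dots> = inv\<^bsub>W\<^esub> (proj (lift x))" using assms by (simp add: lift)
  also have "\<dots> = proj (inv\<^bsub>SDP\<^esub> (lift x))" using assms by (simp add: lift)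
  finally show ?thesis .
qed

lemma proj_lift_eq_one_iff:
  assumes "x \<in> carrier SDP"
  shows "proj (lift x) = proj \<one>\<^bsub>SDP\<^esub> \<longleftrightarrow> proj x = proj \<one>\<^bsub>SDP\<^esub>"
proof -
  have "inj_on phi (carrier W)" using iso by (simp add: iso_def bij_betw_def)
  moreover have "proj x \<in> carrier W" "proj \<one>\<^bsub>SDP\<^esub> \<in> carrier W" using assms by simp_all
  ultimately have "phi (proj x) = phi (proj \<one>\<^bsub>SDP\<^esub>) \<longleftrightarrow> proj x = proj \<one>\<^bsub>SDP\<^esub>"
    by (rule inj_on_eq_iff)
  moreover have "proj (lift \<one>\<^bsub>SDP\<^esub>) = proj \<one>\<^bsub>SDP\<^esub>" by (simp add: lift)
  ultimately show ?thesis using assms by (simp add: lift)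
qed

definition phi_rot :: "sdp \<Rightarrow> complex" where
  "phi_rot x = rot (lift x)"

definition phi_transl :: "sdp \<Rightarrow> complex" where
  "phi_transl x = transl (lift x)"

lemma phi_rot_unit: "x \<in> carrier SDP \<Longrightarrow> cmod (phi_rot x) = 1"
  by (simp add: phi_rot_def lift carrier_SDP_sdp_of)

lemma phi_rot_transl_mult:
  assumes "x \<in> carrier SDP" "y \<in> carrier SDP"
  shows "phi_rot (x \<otimes>\<^bsub>SDP\<^esub> y) = phi_rot x * phi_rot y"
    "phi_transl (x \<otimes>\<^bsub>SDP\<^esub> y) = phi_transl x + phi_rot x * phi_transl y"
  using proj_lift_mult[OF assms] proj_eq_iff[of "lift (x \<otimes>\<^bsub>SDP\<^esub> y)" "lift x \<otimes>\<^bsub>SDP\<^esub> lift y"] assms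
  by (simp_all add: lift phi_rot_def phi_transl_def rot_transl_height_mult)

lemma phi_rot_transl_one: "phi_rot \<one>\<^bsub>SDP\<^esub> = 1" "phi_transl \<one>\<^bsub>SDP\<^esub> = 0"
  using proj_lift_eq_one_iff[of "\<one>\<^bsub>SDP\<^esub>"] proj_eq_iff[of "lift \<one>\<^bsub>SDP\<^esub>" "\<one>\<^bsub>SDP\<^esub>"]
  by (simp_all add: lift phi_rot_def phi_transl_def sdp_of_one)

lemma phi_rot_transl_inv:
  assumes "x \<in> carrier SDP"
  shows "phi_rot (inv\<^bsub>SDP\<^esub> x) = cnj (phi_rot x)"
    "phi_transl (inv\<^bsub>SDP\<^esub> x) = - cnj (phi_rot x) * phi_transl x"
  using proj_lift_inv[OF assms] proj_eq_iff[of "lift (inv\<^bsub>SDP\<^esub> x)" "inv\<^bsub>SDP\<^esub> (lift x)"] assms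
  by (simp_all add: lift phi_rot_def phi_transl_def rot_transl_inv)

lemma phi_rot_commutator:
  assumes "a \<in> carrier SDP" "b \<in> carrier SDP"
  shows "phi_rot (commutator a b) = 1"
proof -
  have "phi_rot (commutator a b) = (phi_rot a * cnj (phi_rot a)) * (phi_rot b * cnj (phi_rot b))"
    using assms by (simp add: commutator_def phi_rot_transl_mult phi_rot_transl_inv)
  then show ?thesis using assms by (simp add: phi_rot_unit unit_mult_cnj)
qed

lemma phi_rot_central: "phi_rot (central c) = 1"
  using central_eq_commutator[of c] by (simp add: phi_rot_commutator)

text \<open>A pure translation is, up to a central factor, the commutator of the rotation by \<open>\<i>\<close> with
  a translation.\<close>

lemma phi_rot_translation:
  assumes x: "x \<in> carrier SDP" and "rot x = 1"
  shows "phi_rot x = 1"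
proof -
  define J where "J = sdp_of \<i> 0 0"
  define h where "h = sdp_of 1 (transl x / (\<i> - 1)) 0"
  have J: "J \<in> carrier SDP" "rot J = \<i>" "transl J = 0" by (simp_all add: J_def)
  have h: "h \<in> carrier SDP" "rot h = 1" "transl h = transl x / (\<i> - 1)" by (simp_all add: h_def)
  have "\<i> - 1 \<noteq> (0::complex)" by (simp add: complex_eq_iff)
  then have "rot (commutator J h) = 1" "transl (commutator J h) = transl x"
    using J h by (simp_all add: commutator_def rot_transl_height_mult rot_transl_inv field_simps)
  then have "x = commutator J h \<otimes>\<^bsub>SDP\<^esub> central (height x - height (commutator J h))"
    using J h assms by (subst carrier_SDP_eq_iff) (auto simp: central_mult_right carrier_SDP_sdp_of)
  then have "phi_rot x = phi_rot (commutator J h \<otimes>\<^bsub>SDP\<^esub> central (height x - height (commutator J h)))"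
    by (rule arg_cong)
  then show ?thesis using J h by (simp add: phi_rot_transl_mult phi_rot_commutator phi_rot_central)
qed

definition rot_char :: "complex \<Rightarrow> complex" where
  "rot_char u = phi_rot (sdp_of u 0 0)"

lemma phi_rot_eq_rot_char:
  assumes x: "x \<in> carrier SDP"
  shows "phi_rot x = rot_char (rot x)"
proof -
  define g where "g = sdp_of (rot x) 0 0"
  have g: "g \<in> carrier SDP" "rot g = rot x" using x by (simp_all add: g_def carrier_SDP_sdp_of)
  have "rot (x \<otimes>\<^bsub>SDP\<^esub> inv\<^bsub>SDP\<^esub> g) = 1"
    using x g by (simp add: rot_transl_height_mult rot_transl_inv unit_mult_cnj carrier_SDP_sdp_of)
  then have "phi_rot x * cnj (phi_rot g) = 1"
    using phi_rot_translation[of "x \<otimes>\<^bsub>SDP\<^esub> inv\<^bsub>SDP\<^esub> g"] x g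
    by (simp add: phi_rot_transl_mult phi_rot_transl_inv)
  then have "phi_rot x * cnj (phi_rot g) * phi_rot g = phi_rot g" by simp
  then have "phi_rot x = phi_rot g" using g by (simp add: phi_rot_unit unit_cnj_mult mult.assoc)
  then show ?thesis by (simp add: rot_char_def g_def)
qed

lemma rot_char_unit: "cmod u = 1 \<Longrightarrow> cmod (rot_char u) = 1"
  by (simp add: rot_char_def phi_rot_unit)

lemma rot_char_mult: "cmod u = 1 \<Longrightarrow> cmod u' = 1 \<Longrightarrow> rot_char (u * u') = rot_char u * rot_char u'"
  using phi_rot_transl_mult[of "sdp_of u 0 0" "sdp_of u' 0 0"]
  by (simp add: rot_char_def sdp_of_mult height_cocycle_def)

definition transl_map :: "complex \<Rightarrow> complex" where
  "transl_map z = phi_transl (sdp_of 1 z 0)"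

lemma phi_transl_central: "phi_transl (central c) = 0"
  using central_eq_commutator[of c]
  by (simp add: commutator_def phi_rot_transl_mult phi_rot_transl_inv phi_rot_translation)

lemma phi_transl_translation:
  assumes x: "x \<in> carrier SDP" and "rot x = 1"
  shows "phi_transl x = transl_map (transl x)"
proof -
  have "x = sdp_of 1 (transl x) 0 \<otimes>\<^bsub>SDP\<^esub> central (height x)"
    using assms by (subst carrier_SDP_eq_iff) (auto simp: central_mult_right)
  then have "phi_transl x = phi_transl (sdp_of 1 (transl x) 0 \<otimes>\<^bsub>SDP\<^esub> central (height x))"
    by (rule arg_cong)
  then show ?thesis by (simp add: phi_rot_transl_mult phi_transl_central transl_map_def)
qed

lemma phi_transl_decomp:
  assumes g: "g \<in> carrier SDP"
  shows "phi_transl g = transl_map (transl g) + phi_transl (sdp_of (rot g) 0 0)"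
proof -
  define g0 where "g0 = sdp_of (rot g) 0 0"
  have g0: "g0 \<in> carrier SDP" "rot g0 = rot g" "transl g0 = 0"
    using g by (simp_all add: g0_def carrier_SDP_sdp_of)
  define n where "n = g \<otimes>\<^bsub>SDP\<^esub> inv\<^bsub>SDP\<^esub> g0"
  have n: "n \<in> carrier SDP" "rot n = 1" "transl n = transl g"
    using g g0 by (simp_all add: n_def rot_transl_height_mult rot_transl_inv unit_mult_cnj carrier_SDP_sdp_of)
  have "g = n \<otimes>\<^bsub>SDP\<^esub> g0" using g g0 by (simp add: n_def SDP.m_assoc)
  then have "phi_transl g = phi_transl (n \<otimes>\<^bsub>SDP\<^esub> g0)" by (rule arg_cong)
  also have "\<dots> = transl_map (transl g) + phi_transl g0"
    using n g0(1) by (simp add: phi_rot_transl_mult phi_rot_translation phi_transl_translation)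
  finally show ?thesis by (simp add: g0_def)
qed

lemma transl_map_add: "transl_map (z + z') = transl_map z + transl_map z'"
  using phi_rot_transl_mult(2)[of "sdp_of 1 z 0" "sdp_of 1 z' 0"]
    phi_transl_translation[of "sdp_of 1 z 0 \<otimes>\<^bsub>SDP\<^esub> sdp_of 1 z' 0"]
  by (simp add: rot_transl_height_mult phi_rot_translation transl_map_def)

lemma transl_map_equivariant:
  assumes u: "cmod u = 1"
  shows "transl_map (u * z) = rot_char u * transl_map z"
proof -
  define g where "g = sdp_of u 0 0"
  have g: "g \<in> carrier SDP" "rot g = u" "transl g = 0" "phi_rot g = rot_char u"
    using u by (simp_all add: g_def rot_char_def)
  have "transl_map (u * z) = phi_transl (g \<otimes>\<^bsub>SDP\<^esub> sdp_of 1 z 0 \<otimes>\<^bsub>SDP\<^esub> inv\<^bsub>SDP\<^esub> g)"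
    using g u by (subst phi_transl_translation)
      (simp_all add: rot_transl_height_mult rot_transl_inv unit_mult_cnj)
  also have "\<dots> = phi_transl g + rot_char u * transl_map z + rot_char u * (- cnj (rot_char u) * phi_transl g)"
    using g by (simp add: phi_rot_transl_mult phi_rot_transl_inv transl_map_def phi_rot_translation)
  also have "\<dots> = rot_char u * transl_map z"
    using rot_char_unit[OF u] by (simp add: algebra_simps unit_mult_cnj)
  finally show ?thesis .
qed

text \<open>On the centre, \<open>\<phi>\<close> is determined by \<open>transl_map\<close>: central elements are commutators of
  translations, whose heights are given by the symplectic form.\<close>

lemma proj_lift_central:
  "proj (lift (central (symp_form v v'))) = proj (central (symp_form (transl_map v) (transl_map v')))"
proof -
  have "proj (lift (central (symp_form v v'))) = phi (proj (commutator (sdp_of 1 v 0) (sdp_of 1 v' 0)))"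
    by (simp add: commutator_translations lift)
  also have "\<dots> = proj (commutator (lift (sdp_of 1 v 0)) (lift (sdp_of 1 v' 0)))"
    by (simp add: commutator_def lift)
  also have "commutator (lift (sdp_of 1 v 0)) (lift (sdp_of 1 v' 0)) =
      central (symp_form (transl_map v) (transl_map v'))"
    using phi_rot_translation[of "sdp_of 1 _ 0"]
    by (subst commutator_translations_carrier) (simp_all add: lift phi_rot_def phi_transl_def transl_map_def)
  finally show ?thesis .
qed

text \<open>Otherwise \<open>\<phi>\<close> would kill the whole centre \<open>\<real>/D\<close>.\<close>

lemma transl_map_nonzero: "\<exists>z. transl_map z \<noteq> 0"
proof (rule ccontr)
  assume "\<not> (\<exists>z. transl_map z \<noteq> 0)"
  then have zero: "symp_form (transl_map v) (transl_map v') = 0" for v v' by (simp add: symp_form_def)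
  have all: "c \<in> heights" for c
  proof -
    have "symp_form 1 (\<i> * of_real c) = c" by (simp add: symp_form_def)
    then have "proj (lift (central c)) = proj (central 0)"
      using proj_lift_central[of 1 "\<i> * of_real c"] by (simp only: zero)
    then have "proj (lift (central c)) = proj \<one>\<^bsub>SDP\<^esub>" by (simp only: central_0)
    then show ?thesis by (simp only: proj_lift_eq_one_iff[OF central_in_carrier] proj_central_eq_one_iff)
  qed
  obtain e where e: "e > 0" "\<forall>c. central c \<in> D \<and> \<bar>c\<bar> < e \<longrightarrow> c = 0" using discrete by blast
  moreover have "central (e / 2) \<in> D" using all[of "e / 2"] by (simp add: heights_def)
  moreover have "\<bar>e / 2\<bar> < e" using e(1) by simp
  ultimately have "e / 2 = 0" by blast
  with e(1) show False by simp
qed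

lemma circle_equivariant: "circle_equivariant transl_map rot_char"
  by unfold_locales
    (simp_all add: transl_map_add transl_map_equivariant rot_char_unit rot_char_mult transl_map_nonzero)


lemma twisted_conj_rot_transl:
  assumes "(proj x, proj y) \<in> twisted_conj W phi" "x \<in> carrier SDP" "y \<in> carrier SDP"
  obtains g where "g \<in> carrier SDP" "rot y = rot g * rot x * cnj (rot_char (rot g))"
    "transl y = transl g + rot g * transl x - rot g * rot x * cnj (rot_char (rot g)) * phi_transl g"
proof -
  obtain G where G: "G \<in> carrier W" "proj y = G \<otimes>\<^bsub>W\<^esub> proj x \<otimes>\<^bsub>W\<^esub> inv\<^bsub>W\<^esub> (phi G)"
    using assms(1) unfolding twisted_conj_def by blast
  obtain g where g: "g \<in> carrier SDP" "G = proj g" using G(1) carrier_W by auto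
  have "proj y = proj (g \<otimes>\<^bsub>SDP\<^esub> x \<otimes>\<^bsub>SDP\<^esub> inv\<^bsub>SDP\<^esub> (lift g))"
    using G g assms(2) by (simp add: lift)
  moreover have "g \<otimes>\<^bsub>SDP\<^esub> x \<otimes>\<^bsub>SDP\<^esub> inv\<^bsub>SDP\<^esub> (lift g) \<in> carrier SDP"
    using g assms(2) by (simp add: lift)
  ultimately have "rot y = rot (g \<otimes>\<^bsub>SDP\<^esub> x \<otimes>\<^bsub>SDP\<^esub> inv\<^bsub>SDP\<^esub> (lift g))"
    "transl y = transl (g \<otimes>\<^bsub>SDP\<^esub> x \<otimes>\<^bsub>SDP\<^esub> inv\<^bsub>SDP\<^esub> (lift g))"
    using proj_eq_iff assms(3) by blast+
  then show ?thesis
    using that g(1) assms(2) lift[OF g(1)] phi_rot_eq_rot_char[OF g(1)]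
    by (simp add: rot_transl_height_mult rot_transl_inv phi_rot_def phi_transl_def algebra_simps)
qed

text \<open>If \<open>rot_char = id\<close>, twisting conjugates the rotation part, which is therefore a class invariant.\<close>

lemma R_infinite_if_rot_char_id:
  assumes "\<forall>u. cmod u = 1 \<longrightarrow> rot_char u = u"
  shows "R_infinite W phi"
proof -
  define u where "u a = Complex a (sqrt (1 - a * a))" for a
  have u: "cmod (u a) = 1" if "a \<in> {0..1}" for a
  proof -
    have "a * a \<le> 1" using that by (simp add: mult_le_one)
    then show ?thesis by (simp add: u_def norm_eq_1_iff_Re_Im power2_eq_square)
  qed
  show ?thesis
  proof (rule infinite_twisted_classes[OF W.is_group phi.homh,
      where S = "{0..1}" and f = "\<lambda>a. proj (sdp_of (u a) 0 0)"])
    show "(\<lambda>a. proj (sdp_of (u a) 0 0)) ` {0..1} \<subseteq> carrier W" using u by auto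
    fix a b assume "a \<in> {0..1}" "b \<in> {0..1}"
      and "(proj (sdp_of (u a) 0 0), proj (sdp_of (u b) 0 0)) \<in> twisted_conj W phi"
    then obtain g where "g \<in> carrier SDP" "u b = rot g * u a * cnj (rot_char (rot g))"
      using u by (elim twisted_conj_rot_transl) auto
    then have "u b = u a" using assms carrier_SDP_sdp_of(2)
      by (simp add: algebra_simps unit_mult_cnj)
    then show "a = b" by (simp add: u_def complex_eq_iff)
  qed simp
qed

lemma heights_scale_iff:
  assumes "\<forall>z. transl_map z = w * cnj z"
  shows "- (cmod w)\<^sup>2 * c \<in> heights \<longleftrightarrow> c \<in> heights"
proof -
  have "symp_form (transl_map 1) (transl_map (\<i> * of_real c)) =
      symp_form (w * cnj 1) (w * cnj (\<i> * of_real c))"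
    using assms by simp
  also have "\<dots> = - (cmod w)\<^sup>2 * symp_form 1 (\<i> * of_real c)" by (rule symp_form_conj)
  also have "\<dots> = - (cmod w)\<^sup>2 * c" by (simp add: symp_form_def)
  moreover have "symp_form 1 (\<i> * of_real c) = c" by (simp add: symp_form_def)
  ultimately have "proj (lift (central c)) = proj (central (- (cmod w)\<^sup>2 * c))"
    using proj_lift_central[of 1 "\<i> * of_real c"] by simp
  then show ?thesis using proj_lift_eq_one_iff[OF central_in_carrier, of c]
    by (simp only: proj_central_eq_one_iff)
qed

text \<open>\<open>D\<close> is infinite and discrete, so it cannot be invariant under a scaling other than \<open>\<pm>1\<close>.\<close>

lemma transl_map_conj_unit:
  assumes w: "w \<noteq> 0" and transl_map: "\<forall>z. transl_map z = w * cnj z"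
  shows "cmod w = 1"
proof -
  define t where "t = (cmod w)\<^sup>2"
  have t: "t > 0" using w by (simp add: t_def)
  have heights_iff: "- t * c \<in> heights \<longleftrightarrow> c \<in> heights" for c
    unfolding t_def using transl_map by (rule heights_scale_iff)
  obtain d where d: "d \<in> heights" "d \<noteq> 0" by (rule heights_nonzero)
  obtain e where e: "e > 0" "\<forall>c. central c \<in> D \<and> \<bar>c\<bar> < e \<longrightarrow> c = 0" using discrete by blast
  have "t = 1"
  proof (rule discrete_scaling_invariant_eq_1[OF d e(1) _ t])
    show "c = 0" if "c \<in> heights" "\<bar>c\<bar> < e" for c using that e(2) by (simp add: heights_def)
    show "t * c \<in> heights" if "c \<in> heights" for c
      using heights_iff[of c] heights_uminus[of "- t * c"] that by simp
    show "c / t \<in> heights" if "c \<in> heights" for c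
      using heights_iff[of "- c / t"] heights_uminus[of "- (c / t)"] that t by simp
  qed
  then show ?thesis using norm_ge_zero[of w] by (simp add: t_def power2_eq_1_iff)
qed

text \<open>If \<open>rot_char = cnj\<close>, twisting maps a translation \<open>z\<close> to \<open>\<pm>z\<close> plus a translation killed by
  \<open>reflection_sum w\<close>, up to the fixed shift coming from the rotation by \<open>\<pi>\<close>.\<close>

lemma twisted_conj_reflection_sum:
  assumes w: "cmod w = 1" and transl_map: "\<forall>z. transl_map z = w * cnj z"
    and rot_char: "\<forall>u. cmod u = 1 \<longrightarrow> rot_char u = cnj u"
    and conj: "(proj (sdp_of 1 z 0), proj (sdp_of 1 z' 0)) \<in> twisted_conj W phi"
  shows "reflection_sum w z' = reflection_sum w z \<or>
    reflection_sum w z' = - reflection_sum w z - reflection_sum w (phi_transl (sdp_of (-1) 0 0))"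
proof -
  obtain g where g: "g \<in> carrier SDP" "1 = rot g * cnj (rot_char (rot g))"
    "z' = transl g + rot g * z - rot g * cnj (rot_char (rot g)) * phi_transl g"
    using conj by (elim twisted_conj_rot_transl) auto
  define u where "u = rot g"
  have "cmod u = 1" using g(1) carrier_SDP_sdp_of(2) by (simp add: u_def)
  then have "cnj (rot_char u) = u" using rot_char by simp
  then have uu: "u * u = 1" and z': "z' = transl g + u * z - u * u * phi_transl g"
    using g(2,3) by (simp_all add: u_def)
  define a where "a = transl g - w * cnj (transl g)"
  have a: "reflection_sum w a = 0" using w by (simp add: a_def reflection_sum_antifixed)
  have "phi_transl g = w * cnj (transl g) + phi_transl (sdp_of u 0 0)"
    using phi_transl_decomp[OF g(1)] transl_map by (simp add: u_def)
  then have z'_eq: "z' = a + u * z - phi_transl (sdp_of u 0 0)"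
    using z' uu by (simp add: a_def algebra_simps)
  have "(u - 1) * (u + 1) = 0" using uu by (simp add: algebra_simps)
  then consider "u = 1" | "u = -1" by (auto simp: eq_neg_iff_add_eq_0)
  then show ?thesis
  proof cases
    case 1
    then have "z' = a + z"
      using z'_eq phi_rot_transl_one(2) by (simp add: sdp_of_one)
    then show ?thesis using a by (simp add: reflection_sum_add)
  next
    case 2
    then have "z' = a - z - phi_transl (sdp_of (-1) 0 0)"
      using z'_eq by simp
    then show ?thesis using a by (simp add: reflection_sum_diff)
  qed
qed

lemma R_infinite_if_rot_char_cnj:
  assumes w: "cmod w = 1" and transl_map: "\<forall>z. transl_map z = w * cnj z"
    and rot_char: "\<forall>u. cmod u = 1 \<longrightarrow> rot_char u = cnj u"
  shows "R_infinite W phi"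
proof -
  obtain q where q: "reflection_sum w q \<noteq> 0" using reflection_sum_nonzero by blast
  define shift where "shift = reflection_sum w (phi_transl (sdp_of (-1) 0 0))"
  define M where "M = cmod shift / cmod (reflection_sum w q)"
  show ?thesis
  proof (rule infinite_twisted_classes[OF W.is_group phi.homh,
      where S = "{M<..}" and f = "\<lambda>r. proj (sdp_of 1 (of_real r * q) 0)"])
    fix r r' assume r: "r \<in> {M<..}" "r' \<in> {M<..}"
      and conj: "(proj (sdp_of 1 (of_real r * q) 0), proj (sdp_of 1 (of_real r' * q) 0)) \<in> twisted_conj W phi"
    from twisted_conj_reflection_sum[OF w transl_map rot_char conj]
    have "of_real r' * reflection_sum w q = of_real r * reflection_sum w q \<or>
        of_real r' * reflection_sum w q = - (of_real r * reflection_sum w q) - shift"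
      by (simp only: reflection_sum_of_real_mult shift_def)
    then show "r = r'"
    proof
      assume "of_real r' * reflection_sum w q = of_real r * reflection_sum w q"
      then show "r = r'" using q by simp
    next
      assume "of_real r' * reflection_sum w q = - (of_real r * reflection_sum w q) - shift"
      then have "of_real (r + r') * reflection_sum w q = - shift" by (simp add: distrib_right)
      then have "cmod (of_real (r + r') * reflection_sum w q) = cmod shift"
        by (simp only: norm_minus_cancel)
      then have "\<bar>r + r'\<bar> * cmod (reflection_sum w q) = cmod shift"
        by (simp only: norm_mult norm_of_real)
      then have "\<bar>r + r'\<bar> = M" using q by (simp add: M_def field_simps)
      moreover have "M \<ge> 0" by (simp add: M_def)
      ultimately show "r = r'" using r by simp
    qed
  qed (auto simp: infinite_Ioi)
qed

lemma R_infinite: "R_infinite W phi"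
  using circle_equivariant.classification[OF circle_equivariant]
proof
  assume "\<exists>w. w \<noteq> 0 \<and> (\<forall>z. transl_map z = w * cnj z) \<and> (\<forall>u. cmod u = 1 \<longrightarrow> rot_char u = cnj u)"
  then obtain w where "w \<noteq> 0" "\<forall>z. transl_map z = w * cnj z" "\<forall>u. cmod u = 1 \<longrightarrow> rot_char u = cnj u"
    by blast
  then show ?thesis using transl_map_conj_unit R_infinite_if_rot_char_cnj by blast
qed (rule R_infinite_if_rot_char_id)

end

lemma dist_one_central: "dist \<one>\<^bsub>SDP\<^esub> (central c) = \<bar>c\<bar>"
proof -
  have "dist ((0::real), (0::real), (0::real)) (0, 0, c) = \<bar>c\<bar>"
    by (simp add: dist_Pair_Pair dist_real_def)
  then show ?thesis by (simp add: central_def sdp_of_def rot_mat_1 SDP_simps dist_Pair_Pair)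
qed

lemma discrete_central_heights:
  assumes top: "subtopology SDP_top D = discrete_topology D" and sub: "subgroup D SDP"
  shows "\<exists>e>0. \<forall>c. central c \<in> D \<and> \<bar>c\<bar> < e \<longrightarrow> c = 0"
proof -
  have "\<one>\<^bsub>SDP\<^esub> \<in> D" using sub subgroup.one_closed by blast
  then have "openin (subtopology SDP_top D) {\<one>\<^bsub>SDP\<^esub>}" using top by simp
  then obtain T where T: "openin SDP_top T" "{\<one>\<^bsub>SDP\<^esub>} = T \<inter> D"
    by (meson openin_subtopology)
  then obtain T' where T': "open T'" "T = T' \<inter> (SO2 \<times> UNIV)"
    unfolding SDP_top_def by (meson openin_subtopology open_openin)
  have "\<one>\<^bsub>SDP\<^esub> \<in> T'" using T T' by blast
  then obtain e where e: "e > 0" "ball \<one>\<^bsub>SDP\<^esub> e \<subseteq> T'" using T'(1) open_contains_ball by blast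
  have "c = 0" if c: "central c \<in> D" "\<bar>c\<bar> < e" for c
  proof -
    have "central c \<in> T'" using c e(2) dist_one_central[of c] by (auto simp: mem_ball)
    moreover have "central c \<in> SO2 \<times> UNIV" using central_in_carrier[of c] by (simp only: SDP_simps)
    ultimately have "central c \<in> T \<inter> D" using c(1) by (simp add: T'(2))
    then have "central c = \<one>\<^bsub>SDP\<^esub>" using T(2) by blast
    then show ?thesis by (simp add: central_def sdp_of_one sdp_of_eq_iff)
  qed
  then show ?thesis using e by blast
qed

theorem proposition5p6:
  fixes D :: "sdp set"
  assumes "subgroup D SDP"
    and "D \<subseteq> Zc"
    and "subtopology SDP_top D = discrete_topology D"
    and "infinite D"
  shows "top_R_infty_property (Walnut D) (Walnut_top D)"
  unfolding top_R_infty_property_def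
proof (intro allI impI)
  fix phi assume "phi \<in> iso (Walnut D) (Walnut D) \<and> homeomorphic_map (Walnut_top D) (Walnut_top D) phi"
  then have "phi \<in> iso (SDP Mod D) (SDP Mod D)" by (simp add: Walnut_def)
  with assms have "walnut_aut D phi"
    by (intro walnut_aut.intro discrete_central_heights)
  then show "R_infinite (Walnut D) phi" unfolding Walnut_def by (rule walnut_aut.R_infinite)
qed

end
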